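(* Let $z=r\mathrm{e}^{i\theta}$ with $r>0$, $|\theta|<\pi/4$, let $H$ be the operator $(Hf)(x)=-f''(x)+z^4x^2f(x)$ in $L^2(\mathbf{R})$, and let $P_n$ be its $n$th spectral projection. Then \[ \liminf_{n\to\infty}n^{-1}\log\|P_n\|\ge\log(\sec 2\theta). \]
   Context: $H$ has eigenvalues $\lambda_n=z^2(2n+1)$ and eigenfunctions $\phi_n(x)=k_n\mathrm{e}^{-z^2x^2/2}H_n(zx)$ ($H_n$ the Hermite polynomials), with constants $k_n$ chosen so that $\int_{\mathbf{R}}\phi_n(x)^2\,\mathrm{d}x=1$ (no complex conjugate). The spectral projection is $P_nf=\big(\int_{\mathbf{R}}f\phi_n\,\mathrm{d}x\big)\phi_n$, so that $\|P_n\|=\int_{\mathbf{R}}|\phi_n|^2\,\mathrm{d}x$. *)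

theory Defs
  imports "HOL-Analysis.Analysis"
begin

fun hermite :: "nat \<Rightarrow> complex \<Rightarrow> complex" where
  "hermite 0 w = 1"
| "hermite (Suc 0) w = 2 * w"
| "hermite (Suc (Suc n)) w = 2 * w * hermite (Suc n) w - 2 * of_nat (Suc n) * hermite n w"

text \<open>Eigenfunction phi_n(x) = k_n exp(-z^2 x^2/2) H_n(z x) of (Hf)(x) = -f''(x) + z^4 x^2 f(x).\<close>
definition eigfun :: "complex \<Rightarrow> (nat \<Rightarrow> complex) \<Rightarrow> nat \<Rightarrow> real \<Rightarrow> complex" where
  "eigfun z k n x = k n * exp (- (z\<^sup>2 * (of_real x)\<^sup>2) / 2) * hermite n (z * of_real x)"

text \<open>Norm of the spectral projection P_n f = (\<integral> f phi_n) phi_n, namely \<integral> |phi_n|^2.\<close>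
definition proj_norm :: "complex \<Rightarrow> (nat \<Rightarrow> complex) \<Rightarrow> nat \<Rightarrow> real" where
  "proj_norm z k n = (LINT x|lborel. (cmod (eigfun z k n x))\<^sup>2)"

end

theory Submission
  imports Defs "HOL-Probability.Probability" "HOL-Real_Asymp.Real_Asymp"
begin

text \<open>
  For \<open>Re t\<^sup>2 > 0\<close> and every \<open>w\<close>, integrating by parts with the recurrence of the Hermite polynomials gives
  \<open>\<integral> exp (- t\<^sup>2 x\<^sup>2) H\<^sub>n(w x) H\<^sub>n(t x) dx = (2 w / t)\<^sup>n n! \<integral> exp (- t\<^sup>2 x\<^sup>2) dx\<close>.
  For \<open>w = t = z\<close> this evaluates the normalisation: \<open>k\<^sub>n\<^sup>2 2\<^sup>n n! \<integral> exp (- z\<^sup>2 x\<^sup>2) dx = 1\<close>.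
  For \<open>w = z\<close> and the real \<open>t = s\<close> with \<open>s\<^sup>2 = Re z\<^sup>2 = r\<^sup>2 cos 2\<theta>\<close>, Cauchy--Schwarz in the weight
  \<open>exp (- s\<^sup>2 x\<^sup>2) = |exp (- z\<^sup>2 x\<^sup>2)|\<close> against the real function \<open>H\<^sub>n(s x)\<close> yields
  \<open>\<integral> exp (- s\<^sup>2 x\<^sup>2) |H\<^sub>n(z x)|\<^sup>2 dx \<ge> (|z|\<^sup>2 / s\<^sup>2)\<^sup>n 2\<^sup>n n! \<integral> exp (- s\<^sup>2 x\<^sup>2) dx\<close>.
  As \<open>|\<integral> exp (- z\<^sup>2 x\<^sup>2) dx| \<le> \<integral> exp (- s\<^sup>2 x\<^sup>2) dx\<close>, together \<open>\<parallel>P\<^sub>n\<parallel> \<ge> (|z|\<^sup>2 / Re z\<^sup>2)\<^sup>n = sec\<^sup>n 2\<theta>\<close>.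
\<close>

section \<open>Hermite polynomials\<close>

lemma hermite_Suc: "hermite (Suc n) w = 2 * w * hermite n w - 2 * of_nat n * hermite (n - 1) w"
  by (cases n) auto

lemma has_field_derivative_hermite:
  "(hermite n has_field_derivative (2 * of_nat n * hermite (n - 1) w)) (at w)"
proof (induction n w rule: hermite.induct)
  case (3 n w)
  have "hermite (Suc (Suc n)) = (\<lambda>w. 2 * w * hermite (Suc n) w - 2 * of_nat (Suc n) * hermite n w)"
    by (simp add: fun_eq_iff)
  moreover have "((\<lambda>w. 2 * w * hermite (Suc n) w - 2 * of_nat (Suc n) * hermite n w) has_field_derivative
      2 * hermite (Suc n) w + 2 * w * (2 * of_nat (Suc n) * hermite n w)
        - 2 * of_nat (Suc n) * (2 * of_nat n * hermite (n - 1) w)) (at w)"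
    by (auto intro!: derivative_eq_intros 3)
  moreover have "2 * hermite (Suc n) w + 2 * w * (2 * of_nat (Suc n) * hermite n w)
        - 2 * of_nat (Suc n) * (2 * of_nat n * hermite (n - 1) w)
      = 2 * of_nat (Suc (Suc n)) * hermite (Suc (Suc n) - 1) w"
    by (simp add: hermite_Suc[of n] algebra_simps)
  ultimately show ?case
    by simp
qed (auto intro!: derivative_eq_intros)

lemma continuous_on_hermite [continuous_intros]:
  "continuous_on S f \<Longrightarrow> continuous_on S (\<lambda>x. hermite n (f x))"
  by (rule continuous_on_compose2[of UNIV "hermite n"])
    (auto intro: DERIV_continuous_on has_field_derivative_hermite)

lemma has_vector_derivative_hermite_scaled:
  "((\<lambda>x. hermite n (c * of_real x)) has_vector_derivative
      c * (2 * of_nat n * hermite (n - 1) (c * of_real x))) (at x)"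
proof -
  have "((\<lambda>x. c * of_real x) has_vector_derivative c) (at x)"
    using has_vector_derivative_mult_right[OF has_vector_derivative_of_real[OF DERIV_ident], of c] by simp
  from field_vector_diff_chain_at[OF this has_field_derivative_hermite]
  show ?thesis
    by (simp add: o_def)
qed

lemma hermite_real: "w \<in> \<real> \<Longrightarrow> hermite n w \<in> \<real>"
  by (induction n w rule: hermite.induct) auto

lemma norm_hermite_le: "cmod (hermite n w) \<le> 4 ^ n * fact n * exp (real n * cmod w)"
proof (induction n w rule: hermite.induct)
  case (2 w)
  have "cmod w \<le> 2 * exp (cmod w)"
    using exp_ge_add_one_self[of "cmod w"] exp_gt_zero[of "cmod w"] by linarith
  then show ?case
    by (simp add: norm_mult)
next
  case (3 n w)
  define E where "E = exp (real (Suc (Suc n)) * cmod w)"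
  have "cmod w \<le> exp (cmod w)"
    using exp_ge_add_one_self[of "cmod w"] by linarith
  then have "cmod w * exp (real (Suc n) * cmod w) \<le> exp (cmod w) * exp (real (Suc n) * cmod w)"
    by (intro mult_right_mono) auto
  also have "\<dots> = E"
    by (simp add: E_def algebra_simps flip: exp_add)
  finally have wE: "cmod w * exp (real (Suc n) * cmod w) \<le> E" .
  have nE: "exp (real n * cmod w) \<le> E"
    by (simp add: E_def mult_right_mono)
  have "cmod (hermite (Suc (Suc n)) w)
      \<le> 2 * cmod w * cmod (hermite (Suc n) w) + 2 * real (Suc n) * cmod (hermite n w)"
    using norm_triangle_ineq4[of "2 * w * hermite (Suc n) w" "2 * of_nat (Suc n) * hermite n w"]
    by (simp add: norm_mult del: of_nat_Suc)
  also have "\<dots> \<le> 2 * 4 ^ Suc n * fact (Suc n) * (cmod w * exp (real (Suc n) * cmod w))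
      + 2 * real (Suc n) * 4 ^ n * fact n * exp (real n * cmod w)"
  proof (rule add_mono)
    show "2 * cmod w * cmod (hermite (Suc n) w)
        \<le> 2 * 4 ^ Suc n * fact (Suc n) * (cmod w * exp (real (Suc n) * cmod w))"
      using mult_left_mono[OF "3"(1), of "2 * cmod w"] by (simp only: mult_ac) simp
    show "2 * real (Suc n) * cmod (hermite n w) \<le> 2 * real (Suc n) * 4 ^ n * fact n * exp (real n * cmod w)"
      using mult_left_mono[OF "3"(2), of "2 * real (Suc n)"] by (simp only: mult_ac)
  qed
  also have "\<dots> \<le> (2 * 4 ^ Suc n * fact (Suc n) + 2 * real (Suc n) * 4 ^ n * fact n) * E"
    unfolding distrib_right by (intro add_mono mult_left_mono wE nE) auto
  also have "\<dots> \<le> 4 ^ Suc (Suc n) * fact (Suc (Suc n)) * E"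
    by (intro mult_right_mono) (simp_all add: E_def algebra_simps)
  finally show ?case
    by (simp add: E_def)
qed simp

section \<open>Gaussian weights\<close>

definition gauss :: "complex \<Rightarrow> real \<Rightarrow> complex" where
  "gauss t x = exp (- (t\<^sup>2 * (of_real x)\<^sup>2))"

lemma norm_gauss: "cmod (gauss t x) = exp (- Re (t\<^sup>2) * x\<^sup>2)"
  by (simp add: gauss_def norm_exp_eq_Re flip: of_real_power)

lemma gauss_of_real: "gauss (of_real s) x = of_real (exp (- s\<^sup>2 * x\<^sup>2))"
  by (simp add: gauss_def flip: of_real_power of_real_mult of_real_minus of_real_exp)

lemma has_vector_derivative_gauss:
  "(gauss t has_vector_derivative (- 2 * t\<^sup>2 * of_real x * gauss t x)) (at x)"
proof -
  have "((\<lambda>w. exp (- (t\<^sup>2 * w\<^sup>2))) has_field_derivative - 2 * t\<^sup>2 * of_real x * gauss t x)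
      (at (of_real x))"
    unfolding gauss_def by (auto intro!: derivative_eq_intros)
  from field_vector_diff_chain_at[OF has_vector_derivative_of_real[OF DERIV_ident] this]
  show ?thesis
    by (simp add: gauss_def[abs_def] o_def)
qed

lemma continuous_on_gauss [continuous_intros]: "continuous_on S (gauss t)"
  unfolding gauss_def by (intro continuous_intros)

lemma has_bochner_integral_exp_square:
  fixes c :: real
  assumes "c > 0"
  shows "has_bochner_integral lborel (\<lambda>x. exp (- c * x\<^sup>2)) (sqrt (pi / c))"
proof -
  define \<sigma> where "\<sigma> = sqrt (1 / (2 * c))"
  have "\<sigma>\<^sup>2 = 1 / (2 * c)"
    using assms by (simp add: \<sigma>_def)
  then have "2 * pi * \<sigma>\<^sup>2 = pi / c" "(x - 0)\<^sup>2 / (2 * \<sigma>\<^sup>2) = c * x\<^sup>2" for x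
    using assms by simp_all
  then have "normal_density 0 \<sigma> = (\<lambda>x. exp (- c * x\<^sup>2) / sqrt (pi / c))"
    by (simp add: normal_density_def fun_eq_iff)
  moreover have "has_bochner_integral lborel (normal_density 0 \<sigma>) 1"
    using assms has_bochner_integral_integrable[OF integrable_normal_density, of \<sigma> 0]
    by (simp add: \<sigma>_def)
  ultimately have "has_bochner_integral lborel (\<lambda>x. exp (- c * x\<^sup>2) / sqrt (pi / c)) 1"
    by simp
  from has_bochner_integral_mult_left[OF this, of "sqrt (pi / c)"] show ?thesis
    using assms by simp
qed

lemma exp_linear_minus_square_le:
  fixes a b x :: real
  assumes "a > 0"
  shows "exp (- a * x\<^sup>2 + b * \<bar>x\<bar>) \<le> exp (b\<^sup>2 / (2 * a)) * exp (- (a / 2) * x\<^sup>2)"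
proof -
  have "b\<^sup>2 / (2 * a) - (a / 2) * x\<^sup>2 - (- a * x\<^sup>2 + b * \<bar>x\<bar>) = (a * \<bar>x\<bar> - b)\<^sup>2 / (2 * a)"
    using assms by (simp add: field_simps power2_eq_square)
  also have "\<dots> \<ge> 0"
    using assms by simp
  finally show ?thesis
    by (simp flip: exp_add)
qed

lemma integrable_gaussian_bounded:
  fixes f :: "real \<Rightarrow> complex"
  assumes "c > 0" "continuous_on UNIV f" "\<And>x. cmod (f x) \<le> C * exp (- c * x\<^sup>2)"
  shows "integrable lborel f"
proof (rule Bochner_Integration.integrable_bound)
  show "integrable lborel (\<lambda>x. C * exp (- c * x\<^sup>2))"
    by (intro integrable_mult_right integrable.intros[OF has_bochner_integral_exp_square[OF assms(1)]])
  show "f \<in> borel_measurable lborel"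
    using assms(2) by (simp add: borel_measurable_continuous_onI)
  show "AE x in lborel. norm (f x) \<le> norm (C * exp (- c * x\<^sup>2))"
    using assms(3) by (intro AE_I2) (auto intro: order_trans[OF _ abs_ge_self])
qed

lemma tendsto_zero_gaussian_bounded:
  fixes f :: "real \<Rightarrow> complex"
  assumes "c > 0" "\<And>x. cmod (f x) \<le> C * exp (- c * x\<^sup>2)"
  shows "(f \<longlongrightarrow> 0) at_top" "(f \<longlongrightarrow> 0) at_bot"
proof -
  have bound: "\<forall>x. norm (f x) \<le> C * exp (- c * x\<^sup>2)"
    using assms(2) by blast
  have "((\<lambda>x. C * exp (- c * x\<^sup>2)) \<longlongrightarrow> 0) at_top" "((\<lambda>x. C * exp (- c * x\<^sup>2)) \<longlongrightarrow> 0) at_bot"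
    using assms(1) by real_asymp+
  then show "(f \<longlongrightarrow> 0) at_top" "(f \<longlongrightarrow> 0) at_bot"
    by (auto intro: Lim_null_comparison[OF always_eventually[OF bound]])
qed

lemma integral_derivative_eq_0:
  fixes F f :: "real \<Rightarrow> complex"
  assumes "\<And>x. (F has_vector_derivative f x) (at x)" "continuous_on UNIV f" "integrable lborel f"
    "(F \<longlongrightarrow> 0) at_top" "(F \<longlongrightarrow> 0) at_bot"
  shows "(LINT x|lborel. f x) = 0"
proof -
  have "(LBINT x=-\<infinity>..\<infinity>. f x) = 0 - 0"
  proof (rule interval_integral_FTC_integrable[where F=F])
    show "isCont f x" for x
      using assms(2) by (simp add: continuous_on_eq_continuous_at)
    show "set_integrable lborel (einterval (- \<infinity>) \<infinity>) f"
      using assms(3) by (simp add: set_integrable_def)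
    show "((F \<circ> real_of_ereal) \<longlongrightarrow> 0) (at_right (- \<infinity>))" "((F \<circ> real_of_ereal) \<longlongrightarrow> 0) (at_left \<infinity>)"
      using assms(4,5) by (simp_all add: ereal_tendsto_simps1)
  qed (use assms(1) in auto)
  then show ?thesis
    by (simp add: interval_lebesgue_integral_def set_lebesgue_integral_def)
qed

lemma norm_gauss_hermite_le:
  assumes "Re (t\<^sup>2) > 0"
  obtains C c where "c > 0"
    "\<And>x. cmod (gauss t x * of_real x ^ j * hermite p (u * of_real x) * hermite q (v * of_real x))
       \<le> C * exp (- c * x\<^sup>2)"
proof
  define a where "a = Re (t\<^sup>2)"
  define b where "b = real j + real p * cmod u + real q * cmod v"
  define K where "K = (4 ^ p * fact p * (4 ^ q * fact q) :: real)"
  show "a / 2 > 0"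
    using assms by (simp add: a_def)
  fix x :: real
  have "\<bar>x\<bar> \<le> exp \<bar>x\<bar>"
    using exp_ge_add_one_self[of "\<bar>x\<bar>"] by linarith
  then have "\<bar>x\<bar> ^ j \<le> exp \<bar>x\<bar> ^ j"
    by (intro power_mono) auto
  then have "\<bar>x\<bar> ^ j \<le> exp (real j * \<bar>x\<bar>)"
    by (simp add: exp_of_nat_mult)
  then have "cmod (gauss t x * of_real x ^ j * hermite p (u * of_real x) * hermite q (v * of_real x))
      \<le> exp (- a * x\<^sup>2) * exp (real j * \<bar>x\<bar>)
         * (4 ^ p * fact p * exp (real p * (cmod u * \<bar>x\<bar>))) * (4 ^ q * fact q * exp (real q * (cmod v * \<bar>x\<bar>)))"
    unfolding norm_mult norm_power norm_gauss a_def
    by (intro mult_mono norm_hermite_le[THEN order_trans]) (auto simp: norm_mult)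
  also have "\<dots> = K * exp (- a * x\<^sup>2 + b * \<bar>x\<bar>)"
    by (simp add: K_def b_def algebra_simps flip: exp_add)
  also have "\<dots> \<le> K * exp (b\<^sup>2 / (2 * a)) * exp (- (a / 2) * x\<^sup>2)"
    using exp_linear_minus_square_le[of a x b] assms by (simp add: K_def a_def)
  finally show "cmod (gauss t x * of_real x ^ j * hermite p (u * of_real x) * hermite q (v * of_real x))
       \<le> K * exp (b\<^sup>2 / (2 * a)) * exp (- (a / 2) * x\<^sup>2)" .
qed

lemma integrable_gauss_hermite:
  assumes "Re (t\<^sup>2) > 0"
  shows "integrable lborel (\<lambda>x. gauss t x * of_real x ^ j * hermite p (u * of_real x) * hermite q (v * of_real x))"
proof -
  obtain C c where c: "c > 0" and bound: "\<And>x. cmod (gauss t x * of_real x ^ j * hermite p (u * of_real x) * hermite q (v * of_real x))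
      \<le> C * exp (- c * x\<^sup>2)"
    using norm_gauss_hermite_le[OF assms, where j=j and p=p and u=u and q=q and v=v] by blast
  have "continuous_on UNIV (\<lambda>x. gauss t x * of_real x ^ j * hermite p (u * of_real x) * hermite q (v * of_real x))"
    by (intro continuous_intros)
  from integrable_gaussian_bounded[OF c this bound] show ?thesis .
qed

lemma tendsto_gauss_hermite:
  assumes "Re (t\<^sup>2) > 0"
  shows "((\<lambda>x. gauss t x * of_real x ^ j * hermite p (u * of_real x) * hermite q (v * of_real x)) \<longlongrightarrow> 0) at_top"
    and "((\<lambda>x. gauss t x * of_real x ^ j * hermite p (u * of_real x) * hermite q (v * of_real x)) \<longlongrightarrow> 0) at_bot"
proof -
  obtain C c where c: "c > 0" and bound: "\<And>x. cmod (gauss t x * of_real x ^ j * hermite p (u * of_real x) * hermite q (v * of_real x))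
      \<le> C * exp (- c * x\<^sup>2)"
    using norm_gauss_hermite_le[OF assms, where j=j and p=p and u=u and q=q and v=v] by blast
  from tendsto_zero_gaussian_bounded[OF c bound]
  show "((\<lambda>x. gauss t x * of_real x ^ j * hermite p (u * of_real x) * hermite q (v * of_real x)) \<longlongrightarrow> 0) at_top"
    and "((\<lambda>x. gauss t x * of_real x ^ j * hermite p (u * of_real x) * hermite q (v * of_real x)) \<longlongrightarrow> 0) at_bot"
    by blast+
qed

section \<open>The Hermite--Gauss integrals\<close>

lemma has_vector_derivative_gauss_hermite:
  "((\<lambda>x. gauss t x * hermite p (u * of_real x) * hermite q (v * of_real x)) has_vector_derivative
      - 2 * t\<^sup>2 * (gauss t x * of_real x * hermite p (u * of_real x) * hermite q (v * of_real x))
      + 2 * of_nat p * u * (gauss t x * hermite (p - 1) (u * of_real x) * hermite q (v * of_real x))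
      + 2 * of_nat q * v * (gauss t x * hermite p (u * of_real x) * hermite (q - 1) (v * of_real x))) (at x)"
proof -
  have "((\<lambda>x. gauss t x * hermite p (u * of_real x) * hermite q (v * of_real x)) has_vector_derivative
      gauss t x * hermite p (u * of_real x) * (v * (2 * of_nat q * hermite (q - 1) (v * of_real x)))
      + (gauss t x * (u * (2 * of_nat p * hermite (p - 1) (u * of_real x)))
         + - 2 * t\<^sup>2 * of_real x * gauss t x * hermite p (u * of_real x)) * hermite q (v * of_real x)) (at x)"
    by (intro has_vector_derivative_mult has_vector_derivative_gauss has_vector_derivative_hermite_scaled)
  then show ?thesis
    by (rule has_vector_derivative_eq_rhs) (simp add: algebra_simps)
qed

text \<open>Integration by parts, with the recurrence applied to the second factor.\<close>

lemma integral_gauss_hermite_Suc: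
  assumes t: "Re (t\<^sup>2) > 0"
  shows "(LINT x|lborel. gauss t x * hermite (Suc n) (w * of_real x) * hermite (Suc m) (t * of_real x))
    = 2 * of_nat (Suc n) * w / t * (LINT x|lborel. gauss t x * hermite n (w * of_real x) * hermite m (t * of_real x))"
proof -
  have "t \<noteq> 0"
    using t by auto
  define f1 where "f1 x = gauss t x * of_real x * hermite (Suc n) (w * of_real x) * hermite m (t * of_real x)" for x
  define f2 where "f2 x = gauss t x * hermite (Suc n) (w * of_real x) * hermite (m - 1) (t * of_real x)" for x
  define f3 where "f3 x = gauss t x * hermite n (w * of_real x) * hermite m (t * of_real x)" for x
  have int: "integrable lborel f1" "integrable lborel f2" "integrable lborel f3"
    unfolding f1_def f2_def f3_def
    using integrable_gauss_hermite[OF t, where j=1 and p="Suc n" and u=w and q=m and v=t]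
      integrable_gauss_hermite[OF t, where j=0 and p="Suc n" and u=w and q="m - 1" and v=t]
      integrable_gauss_hermite[OF t, where j=0 and p=n and u=w and q=m and v=t]
    by simp_all
  have "(LINT x|lborel. - 2 * t\<^sup>2 * f1 x + 2 * of_nat (Suc n) * w * f3 x + 2 * of_nat m * t * f2 x) = 0"
  proof (rule integral_derivative_eq_0[where
        F = "\<lambda>x. gauss t x * hermite (Suc n) (w * of_real x) * hermite m (t * of_real x)"])
    show "((\<lambda>x. gauss t x * hermite (Suc n) (w * of_real x) * hermite m (t * of_real x)) has_vector_derivative
        - 2 * t\<^sup>2 * f1 x + 2 * of_nat (Suc n) * w * f3 x + 2 * of_nat m * t * f2 x) (at x)" for x
      using has_vector_derivative_gauss_hermite[of t "Suc n" w m t x] by (simp add: f1_def f2_def f3_def)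
    show "continuous_on UNIV (\<lambda>x. - 2 * t\<^sup>2 * f1 x + 2 * of_nat (Suc n) * w * f3 x + 2 * of_nat m * t * f2 x)"
      unfolding f1_def f2_def f3_def by (intro continuous_intros)
    show "integrable lborel (\<lambda>x. - 2 * t\<^sup>2 * f1 x + 2 * of_nat (Suc n) * w * f3 x + 2 * of_nat m * t * f2 x)"
      using int by simp
  qed (use tendsto_gauss_hermite[OF t, where j=0 and p="Suc n" and u=w and q=m and v=t] in simp_all)
  then have parts: "- 2 * t\<^sup>2 * (LINT x|lborel. f1 x) + 2 * of_nat (Suc n) * w * (LINT x|lborel. f3 x)
      + 2 * of_nat m * t * (LINT x|lborel. f2 x) = 0"
    using int by simp
  have "(LINT x|lborel. gauss t x * hermite (Suc n) (w * of_real x) * hermite (Suc m) (t * of_real x))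
      = (LINT x|lborel. 2 * t * f1 x - 2 * of_nat m * f2 x)"
    by (rule Bochner_Integration.integral_cong) (simp_all add: hermite_Suc[of m] f1_def f2_def algebra_simps)
  also have "\<dots> = 2 * t * (LINT x|lborel. f1 x) - 2 * of_nat m * (LINT x|lborel. f2 x)"
    using int by simp
  also have "\<dots> = 2 * of_nat (Suc n) * w / t * (LINT x|lborel. f3 x)"
    using parts \<open>t \<noteq> 0\<close> by (simp add: field_simps power2_eq_square)
  finally show ?thesis
    unfolding f3_def .
qed

lemma integral_gauss_hermite:
  assumes "Re (t\<^sup>2) > 0"
  shows "(LINT x|lborel. gauss t x * hermite n (w * of_real x) * hermite n (t * of_real x))
    = (2 * w / t) ^ n * fact n * (LINT x|lborel. gauss t x)"
proof (induction n)
  case (Suc n)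
  show ?case
    unfolding integral_gauss_hermite_Suc[OF assms] Suc by (simp add: algebra_simps)
qed simp

lemma Reals_mult_self: "u \<in> \<real> \<Longrightarrow> u * u = of_real ((cmod u)\<^sup>2)"
  by (metis Reals_cnj_iff complex_norm_square)

lemma integral_gauss_norm_hermite_real:
  assumes "s \<noteq> 0"
  shows "(LINT x|lborel. exp (- s\<^sup>2 * x\<^sup>2) * (cmod (hermite n (of_real s * of_real x)))\<^sup>2)
    = 2 ^ n * fact n * (LINT x|lborel. exp (- s\<^sup>2 * x\<^sup>2))"
proof -
  have Re_pos: "Re ((of_real s)\<^sup>2) > 0"
    using assms by (simp flip: of_real_power)
  have "gauss (of_real s) x * hermite n (of_real s * of_real x) * hermite n (of_real s * of_real x)
      = of_real (exp (- s\<^sup>2 * x\<^sup>2) * (cmod (hermite n (of_real s * of_real x)))\<^sup>2)" for x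
  proof -
    have "hermite n (of_real s * of_real x) \<in> \<real>"
      by (intro hermite_real Reals_mult) simp_all
    then show ?thesis
      by (simp add: Reals_mult_self gauss_of_real mult.assoc)
  qed
  then have "of_real (LINT x|lborel. exp (- s\<^sup>2 * x\<^sup>2) * (cmod (hermite n (of_real s * of_real x)))\<^sup>2)
      = (LINT x|lborel. gauss (of_real s) x * hermite n (of_real s * of_real x) * hermite n (of_real s * of_real x))"
    by (simp flip: integral_complex_of_real)
  also have "\<dots> = (2 * of_real s / of_real s) ^ n * fact n * (LINT x|lborel. gauss (of_real s) x)"
    by (rule integral_gauss_hermite[OF Re_pos])
  also have "\<dots> = of_real (2 ^ n * fact n * (LINT x|lborel. exp (- s\<^sup>2 * x\<^sup>2)))"
    using assms by (simp add: gauss_of_real)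
  finally show ?thesis
    by (simp only: of_real_eq_iff)
qed

section \<open>The lower bound for the projection norms\<close>

lemma Cauchy_Schwarz_weighted_integral:
  fixes w f g :: "'a \<Rightarrow> real"
  assumes "\<And>x. 0 \<le> w x"
    and "integrable M (\<lambda>x. w x * (f x)\<^sup>2)" "integrable M (\<lambda>x. w x * (g x)\<^sup>2)"
    and "integrable M (\<lambda>x. w x * f x * g x)"
  shows "(\<integral>x. w x * f x * g x \<partial>M)\<^sup>2 \<le> (\<integral>x. w x * (f x)\<^sup>2 \<partial>M) * (\<integral>x. w x * (g x)\<^sup>2 \<partial>M)"
proof -
  define A where "A = (\<integral>x. w x * (f x)\<^sup>2 \<partial>M)"
  define G where "G = (\<integral>x. w x * (g x)\<^sup>2 \<partial>M)"
  define Y where "Y = (\<integral>x. w x * f x * g x \<partial>M)"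
  have quadratic: "0 \<le> A - 2 * \<tau> * Y + \<tau>\<^sup>2 * G" for \<tau>
  proof -
    have "0 \<le> (\<integral>x. w x * (f x - \<tau> * g x)\<^sup>2 \<partial>M)"
      using assms(1) by (intro integral_nonneg_AE) simp
    also have "\<dots> = (\<integral>x. w x * (f x)\<^sup>2 - 2 * \<tau> * (w x * f x * g x) + \<tau>\<^sup>2 * (w x * (g x)\<^sup>2) \<partial>M)"
      by (simp add: power2_eq_square algebra_simps)
    also have "\<dots> = A - 2 * \<tau> * Y + \<tau>\<^sup>2 * G"
      using assms(2-4) by (simp add: A_def G_def Y_def)
    finally show ?thesis .
  qed
  have "G \<ge> 0"
    unfolding G_def using assms(1) by (intro integral_nonneg_AE) simp
  show ?thesis
  proof (cases "G = 0")
    case True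
    have "Y = 0"
    proof (rule ccontr)
      assume "Y \<noteq> 0"
      then show False
        using quadratic[of "(A + 1) / (2 * Y)"] True by simp
    qed
    then show ?thesis
      by (simp add: Y_def True[unfolded G_def])
  next
    case False
    with \<open>G \<ge> 0\<close> have "G > 0" by simp
    have "A - 2 * (Y / G) * Y + (Y / G)\<^sup>2 * G = (A * G - Y\<^sup>2) / G"
      using False by (simp add: field_simps power2_eq_square)
    then have "Y\<^sup>2 \<le> A * G"
      using quadratic[of "Y / G"] \<open>G > 0\<close> by (simp add: zero_le_divide_iff)
    then show ?thesis
      by (simp add: A_def G_def Y_def)
  qed
qed

lemma norm_integral_gauss_hermite_sq_le:
  assumes t: "Re (t\<^sup>2) > 0"
  shows "(cmod (LINT x|lborel. gauss t x * hermite n (u * of_real x) * hermite n (v * of_real x)))\<^sup>2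
    \<le> (LINT x|lborel. exp (- Re (t\<^sup>2) * x\<^sup>2) * (cmod (hermite n (u * of_real x)))\<^sup>2)
      * (LINT x|lborel. exp (- Re (t\<^sup>2) * x\<^sup>2) * (cmod (hermite n (v * of_real x)))\<^sup>2)"
proof -
  have norm_prod: "cmod (gauss t x * hermite n (a * of_real x) * hermite n (b * of_real x))
      = exp (- Re (t\<^sup>2) * x\<^sup>2) * cmod (hermite n (a * of_real x)) * cmod (hermite n (b * of_real x))" for a b x
    by (simp add: norm_gauss norm_mult)
  have int: "integrable lborel
      (\<lambda>x. exp (- Re (t\<^sup>2) * x\<^sup>2) * cmod (hermite n (a * of_real x)) * cmod (hermite n (b * of_real x)))" for a b
    using integrable_norm[OF integrable_gauss_hermite[OF t, where j=0 and p=n and u=a and q=n and v=b]]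
    by (simp add: norm_prod)
  have "cmod (LINT x|lborel. gauss t x * hermite n (u * of_real x) * hermite n (v * of_real x))
      \<le> (LINT x|lborel. exp (- Re (t\<^sup>2) * x\<^sup>2) * cmod (hermite n (u * of_real x)) * cmod (hermite n (v * of_real x)))"
    unfolding norm_prod[symmetric] by (rule integral_norm_bound)
  then have "(cmod (LINT x|lborel. gauss t x * hermite n (u * of_real x) * hermite n (v * of_real x)))\<^sup>2
      \<le> (LINT x|lborel. exp (- Re (t\<^sup>2) * x\<^sup>2) * cmod (hermite n (u * of_real x)) * cmod (hermite n (v * of_real x)))\<^sup>2"
    by (intro power_mono) simp_all
  also have "\<dots> \<le> (LINT x|lborel. exp (- Re (t\<^sup>2) * x\<^sup>2) * (cmod (hermite n (u * of_real x)))\<^sup>2)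
      * (LINT x|lborel. exp (- Re (t\<^sup>2) * x\<^sup>2) * (cmod (hermite n (v * of_real x)))\<^sup>2)"
    using int[of u u] int[of v v] int[of u v]
    by (intro Cauchy_Schwarz_weighted_integral) (simp_all add: power2_eq_square mult.assoc)
  finally show ?thesis .
qed

lemma integral_norm_hermite_ge:
  assumes "Re (z\<^sup>2) > 0"
  shows "(cmod z ^ 2 / Re (z\<^sup>2)) ^ n * (2 ^ n * fact n) * (LINT x|lborel. exp (- Re (z\<^sup>2) * x\<^sup>2))
    \<le> (LINT x|lborel. exp (- Re (z\<^sup>2) * x\<^sup>2) * (cmod (hermite n (z * of_real x)))\<^sup>2)"
proof -
  define a where "a = Re (z\<^sup>2)"
  define s where "s = sqrt a"
  define t where "t = complex_of_real s"
  define Q :: real where "Q = 2 ^ n * fact n"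
  define I where "I = (LINT x|lborel. exp (- a * x\<^sup>2))"
  have "a > 0" "s > 0" "s\<^sup>2 = a"
    using assms by (simp_all add: a_def s_def)
  have "Re (t\<^sup>2) = a" "cmod t = s"
    using \<open>s\<^sup>2 = a\<close> \<open>s > 0\<close> by (simp_all add: t_def flip: of_real_power)
  with \<open>a > 0\<close> have t: "Re (t\<^sup>2) > 0"
    by simp
  have "I > 0"
    using has_bochner_integral_exp_square[OF \<open>a > 0\<close>] \<open>a > 0\<close> by (simp add: I_def has_bochner_integral_iff)
  have "(LINT x|lborel. gauss t x) = of_real I"
    using \<open>s\<^sup>2 = a\<close> by (simp add: t_def gauss_of_real I_def)
  then have "cmod (LINT x|lborel. gauss t x * hermite n (z * of_real x) * hermite n (t * of_real x))
      = (cmod z / s) ^ n * Q * I"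
    using \<open>a > 0\<close> \<open>cmod t = s\<close> \<open>Re (t\<^sup>2) = a\<close> \<open>I > 0\<close>
    by (simp add: integral_gauss_hermite Q_def norm_mult norm_divide norm_power power_mult_distrib power_divide)
  then have "(cmod (LINT x|lborel. gauss t x * hermite n (z * of_real x) * hermite n (t * of_real x)))\<^sup>2
      = ((cmod z / s)\<^sup>2) ^ n * Q\<^sup>2 * I\<^sup>2"
    by (simp only: power_mult_distrib power2_eq_square mult_ac)
  also have "(cmod z / s)\<^sup>2 = cmod z ^ 2 / a"
    using \<open>s\<^sup>2 = a\<close> by (simp add: power_divide)
  finally have pairing: "(cmod (LINT x|lborel. gauss t x * hermite n (z * of_real x) * hermite n (t * of_real x)))\<^sup>2
      = (cmod z ^ 2 / a) ^ n * Q\<^sup>2 * I\<^sup>2" .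
  have "(LINT x|lborel. exp (- Re (t\<^sup>2) * x\<^sup>2) * (cmod (hermite n (t * of_real x)))\<^sup>2) = Q * I"
    using integral_gauss_norm_hermite_real[of s n] \<open>s > 0\<close> \<open>s\<^sup>2 = a\<close> \<open>Re (t\<^sup>2) = a\<close>
    by (simp add: t_def Q_def I_def)
  with norm_integral_gauss_hermite_sq_le[OF t, of n z t]
  have "(cmod z ^ 2 / a) ^ n * Q\<^sup>2 * I\<^sup>2
      \<le> (LINT x|lborel. exp (- Re (t\<^sup>2) * x\<^sup>2) * (cmod (hermite n (z * of_real x)))\<^sup>2) * (Q * I)"
    unfolding pairing by simp
  then have "((cmod z ^ 2 / a) ^ n * Q * I) * (Q * I)
      \<le> (LINT x|lborel. exp (- a * x\<^sup>2) * (cmod (hermite n (z * of_real x)))\<^sup>2) * (Q * I)"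
    unfolding \<open>Re (t\<^sup>2) = a\<close> by (simp only: power2_eq_square mult_ac)
  then show ?thesis
    using \<open>I > 0\<close> by (simp add: Q_def I_def a_def)
qed

lemma proj_norm_ge:
  assumes z: "Re (z\<^sup>2) > 0" and normalized: "(LINT x|lborel. (eigfun z k n x)\<^sup>2) = 1"
  shows "(cmod z ^ 2 / Re (z\<^sup>2)) ^ n \<le> proj_norm z k n"
proof -
  define \<rho> where "\<rho> = cmod z ^ 2 / Re (z\<^sup>2)"
  define Q :: real where "Q = 2 ^ n * fact n"
  define L where "L = (LINT x|lborel. gauss z x)"
  define I where "I = (LINT x|lborel. exp (- Re (z\<^sup>2) * x\<^sup>2))"
  define A where "A = (LINT x|lborel. exp (- Re (z\<^sup>2) * x\<^sup>2) * (cmod (hermite n (z * of_real x)))\<^sup>2)"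
  have "z \<noteq> 0" "\<rho> \<ge> 0"
    using z by (auto simp: \<rho>_def)
  have eigfun_sq: "(eigfun z k n x)\<^sup>2 = (k n)\<^sup>2 * (gauss z x * hermite n (z * of_real x) * hermite n (z * of_real x))" for x
    by (simp add: eigfun_def gauss_def power_mult_distrib power2_eq_square mult_ac flip: exp_add)
  have "(k n)\<^sup>2 * (of_real Q * L) = 1"
    using normalized \<open>z \<noteq> 0\<close> by (simp add: eigfun_sq integral_gauss_hermite[OF z] L_def Q_def)
  then have "cmod ((k n)\<^sup>2 * (of_real Q * L)) = 1"
    by simp
  then have k: "(cmod (k n))\<^sup>2 * Q * cmod L = 1"
    by (simp add: Q_def norm_mult norm_power mult.assoc)
  have "cmod L \<le> I"
    unfolding L_def I_def norm_gauss[symmetric] by (rule integral_norm_bound)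
  have "cmod L > 0"
    using k by (cases "cmod L = 0") auto
  have "(cmod (eigfun z k n x))\<^sup>2
      = (cmod (k n))\<^sup>2 * (exp (- Re (z\<^sup>2) * x\<^sup>2) * (cmod (hermite n (z * of_real x)))\<^sup>2)" for x
  proof -
    have "(cmod (eigfun z k n x))\<^sup>2 = cmod ((eigfun z k n x)\<^sup>2)"
      by (simp add: norm_power)
    also have "\<dots> = cmod ((k n)\<^sup>2) * (cmod (gauss z x) * cmod (hermite n (z * of_real x)) * cmod (hermite n (z * of_real x)))"
      by (simp only: eigfun_sq norm_mult)
    finally show ?thesis
      by (simp add: norm_mult norm_power norm_gauss power2_eq_square)
  qed
  then have "proj_norm z k n = (cmod (k n))\<^sup>2 * A"
    by (simp add: proj_norm_def A_def)
  also have "\<dots> \<ge> (cmod (k n))\<^sup>2 * (\<rho> ^ n * Q * I)"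
    using integral_norm_hermite_ge[OF z, of n] by (intro mult_left_mono) (simp_all add: \<rho>_def Q_def I_def A_def)
  also have "(cmod (k n))\<^sup>2 * (\<rho> ^ n * Q * I) = \<rho> ^ n * (I / cmod L)"
    using k \<open>cmod L > 0\<close> by (simp add: field_simps)
  also have "\<dots> \<ge> \<rho> ^ n"
    using \<open>cmod L \<le> I\<close> \<open>cmod L > 0\<close> \<open>\<rho> \<ge> 0\<close> by (simp add: le_divide_eq mult_left_mono)
  finally show ?thesis
    by (simp add: \<rho>_def)
qed

lemma liminf_ln_div_ge:
  fixes p :: "nat \<Rightarrow> real"
  assumes "q > 0" "\<And>n. q ^ n \<le> p n"
  shows "ereal (ln q) \<le> liminf (\<lambda>n. ereal (ln (p n) / real n))"
proof (rule Liminf_bounded)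
  show "\<forall>\<^sub>F n in sequentially. ereal (ln q) \<le> ereal (ln (p n) / real n)"
    using eventually_ge_at_top[of "1::nat"]
  proof eventually_elim
    case (elim n)
    have "real n * ln q = ln (q ^ n)"
      using \<open>q > 0\<close> by (simp add: ln_realpow)
    also have "\<dots> \<le> ln (p n)"
      using assms(2)[of n] zero_less_power[OF \<open>q > 0\<close>, of n] by simp
    finally show ?case
      using elim by (simp add: field_simps)
  qed
qed

lemma Re_power2_polar: "Re ((of_real r * exp (\<i> * of_real \<theta>))\<^sup>2) = r\<^sup>2 * cos (2 * \<theta>)"
proof -
  have "Re ((of_real r * exp (\<i> * of_real \<theta>))\<^sup>2) = r\<^sup>2 * ((cos \<theta>)\<^sup>2 - (sin \<theta>)\<^sup>2)"
    by (simp add: power2_eq_square algebra_simps flip: cis_conv_exp)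
  then show ?thesis
    by (simp add: cos_double)
qed

theorem theorem7:
  fixes r \<theta> :: real and k :: "nat \<Rightarrow> complex"
  assumes "r > 0" and "\<bar>\<theta>\<bar> < pi / 4"
    and "\<And>n. (LINT x|lborel. (eigfun (of_real r * exp (\<i> * of_real \<theta>)) k n x)\<^sup>2) = 1"
  shows "liminf (\<lambda>n. ereal (ln (proj_norm (of_real r * exp (\<i> * of_real \<theta>)) k n) / real n))
           \<ge> ereal (ln (1 / cos (2 * \<theta>)))"
proof -
  define z where "z = of_real r * exp (\<i> * of_real \<theta>)"
  have "cos (2 * \<theta>) > 0"
    using assms(2) by (intro cos_gt_zero_pi) auto
  have "Re (z\<^sup>2) = r\<^sup>2 * cos (2 * \<theta>)" "cmod z = r"
    using assms(1) by (simp_all add: z_def Re_power2_polar norm_mult)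
  then have z: "Re (z\<^sup>2) > 0" and \<rho>: "cmod z ^ 2 / Re (z\<^sup>2) = 1 / cos (2 * \<theta>)"
    using assms(1) \<open>cos (2 * \<theta>) > 0\<close> by simp_all
  have "(cmod z ^ 2 / Re (z\<^sup>2)) ^ n \<le> proj_norm z k n" for n
    using z assms(3) unfolding z_def by (rule proj_norm_ge)
  then have "(1 / cos (2 * \<theta>)) ^ n \<le> proj_norm z k n" for n
    unfolding \<rho> .
  from liminf_ln_div_ge[OF _ this] \<open>cos (2 * \<theta>) > 0\<close> show ?thesis
    by (simp add: z_def)
qed

end
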